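(* Let $H$ be a separable complex Hilbert space, $(\Omega,\mu)$ a measure space with positive measure, let $K\in B(H)$ have closed range, let $F:\Omega\to H$ be a Parseval continuous $K$-frame of $H$, and let $\tilde F(\omega)=K^{\dagger}F(\omega)$ be its canonical dual continuous $K$-Bessel sequence. Then: (1) $F$ is continuous $L^2$-independent if and only if $\tilde F$ is continuous $L^2$-independent; (2) if $F$ admits a unique dual continuous $K$-Bessel sequence, then $\tilde F$ admits a unique dual continuous $K^{\ast}$-Bessel sequence.
   Context: A map $F:\Omega\to H$ is weakly measurable if $\omega\mapsto\langle f,F(\omega)\rangle$ is measurable for every $f\in H$. A continuous Bessel sequence is a weakly measurable $G$ with $\int_\Omega|\langle f,G(\omega)\rangle|^2\,d\mu(\omega)\le B\|f\|^2$ for all $f\in H$, for some $B>0$. A Parseval continuous $K$-frame is a weakly measurable $F$ with $\int_\Omega|\langle f,F(\omega)\rangle|^2\,d\mu(\omega)=\|K^{\ast}f\|^2$ for all $f\in H$. For $L\in B(H)$ and a map $E:\Omega\to H$, a dual continuous $L$-Bessel sequence of $E$ is a continuous Bessel sequence $G$ with $Lf=\int_\Omega\langle f,G(\omega)\rangle E(\omega)\,d\mu(\omega)$ for all $f\in H$. A continuous Bessel mapping $E$ is (continuous) $L^2$-independent if $\int_\Omega\phi(\omega)E(\omega)\,d\mu(\omega)=0$ with $\phi\in L^2(\Omega,\mu)$ implies $\phi=0$ a.e. $K^{\dagger}$ is the Moore–Penrose pseudo-inverse of $K$; the canonical dual continuous $K$-Bessel sequence of $F$ is $K^{\dagger}F$.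 *)

theory Defs
  imports "HOL-Analysis.Analysis"
begin

class complex_inner = real_normed_vector +
  fixes scaleC :: "complex \<Rightarrow> 'a \<Rightarrow> 'a" (infixr \<open>*\<^sub>C\<close> 75)
    and cinner :: "'a \<Rightarrow> 'a \<Rightarrow> complex"
  assumes scaleC_add_right: "a *\<^sub>C (x + y) = a *\<^sub>C x + a *\<^sub>C y"
    and scaleC_add_left: "(a + b) *\<^sub>C x = a *\<^sub>C x + b *\<^sub>C x"
    and scaleC_scaleC: "a *\<^sub>C (b *\<^sub>C x) = (a * b) *\<^sub>C x"
    and scaleC_one: "1 *\<^sub>C x = x"
    and scaleR_scaleC: "scaleR r x = complex_of_real r *\<^sub>C x"
    and cinner_commute: "cinner x y = cnj (cinner y x)"
    and cinner_add_left: "cinner (x + y) z = cinner x z + cinner y z"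
    and cinner_scaleC_left: "cinner (a *\<^sub>C x) y = a * cinner x y"
    and cinner_self_real: "cinner x x = complex_of_real (Re (cinner x x))"
    and cinner_self_nonneg: "0 \<le> Re (cinner x x)"
    and norm_eq_sqrt_cinner: "norm x = sqrt (Re (cinner x x))"

class chilbert_space = complex_inner + complete_space

definition bounded_clinear :: "('a::complex_inner \<Rightarrow> 'b::complex_inner) \<Rightarrow> bool" where
  "bounded_clinear T \<longleftrightarrow> bounded_linear T \<and> (\<forall>c x. T (c *\<^sub>C x) = c *\<^sub>C T x)"

definition cadjoint :: "('a::complex_inner \<Rightarrow> 'b::complex_inner) \<Rightarrow> ('b \<Rightarrow> 'a)" where
  "cadjoint T = (THE S. \<forall>x y. cinner (T x) y = cinner x (S y))"

text \<open>Moore--Penrose pseudo-inverse of a bounded operator (with closed range):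
the unique bounded operator satisfying the four Penrose equations.\<close>
definition pinv :: "('a::complex_inner \<Rightarrow> 'a) \<Rightarrow> ('a \<Rightarrow> 'a)" where
  "pinv K = (THE L. bounded_clinear L
       \<and> (\<forall>x. K (L (K x)) = K x)
       \<and> (\<forall>x. L (K (L x)) = L x)
       \<and> (\<forall>x y. cinner (K (L x)) y = cinner x (K (L y)))
       \<and> (\<forall>x y. cinner (L (K x)) y = cinner x (L (K y))))"

definition weakly_measurable :: "'w measure \<Rightarrow> ('w \<Rightarrow> 'a::complex_inner) \<Rightarrow> bool" where
  "weakly_measurable M F \<longleftrightarrow> (\<forall>f. (\<lambda>\<omega>. cinner f (F \<omega>)) \<in> borel_measurable M)"

definition cont_bessel :: "'w measure \<Rightarrow> ('w \<Rightarrow> 'a::complex_inner) \<Rightarrow> bool" where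
  "cont_bessel M G \<longleftrightarrow> weakly_measurable M G \<and>
     (\<exists>B>0. \<forall>f. (\<integral>\<^sup>+\<omega>. ennreal ((cmod (cinner f (G \<omega>)))\<^sup>2) \<partial>M) \<le> ennreal (B * (norm f)\<^sup>2))"

definition parseval_cont_K_frame ::
    "'w measure \<Rightarrow> ('a::complex_inner \<Rightarrow> 'a) \<Rightarrow> ('w \<Rightarrow> 'a) \<Rightarrow> bool" where
  "parseval_cont_K_frame M K F \<longleftrightarrow> weakly_measurable M F \<and>
     (\<forall>f. (\<integral>\<^sup>+\<omega>. ennreal ((cmod (cinner f (F \<omega>)))\<^sup>2) \<partial>M) = ennreal ((norm (cadjoint K f))\<^sup>2))"

text \<open>Weak (Pettis-type) integral: \<open>x = \<integral> \<phi>(\<omega>) E(\<omega>) d\<mu>(\<omega>)\<close> in the weak sense.\<close>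
definition weak_integral_is ::
    "'w measure \<Rightarrow> ('w \<Rightarrow> complex) \<Rightarrow> ('w \<Rightarrow> 'a::complex_inner) \<Rightarrow> 'a \<Rightarrow> bool" where
  "weak_integral_is M \<phi> E x \<longleftrightarrow>
     (\<forall>g. integrable M (\<lambda>\<omega>. cinner (\<phi> \<omega> *\<^sub>C E \<omega>) g)
        \<and> (\<integral>\<omega>. cinner (\<phi> \<omega> *\<^sub>C E \<omega>) g \<partial>M) = cinner x g)"

definition dual_cont_bessel ::
    "'w measure \<Rightarrow> ('a::complex_inner \<Rightarrow> 'a) \<Rightarrow> ('w \<Rightarrow> 'a) \<Rightarrow> ('w \<Rightarrow> 'a) \<Rightarrow> bool" where
  "dual_cont_bessel M L E G \<longleftrightarrow> cont_bessel M G \<and>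
     (\<forall>f. weak_integral_is M (\<lambda>\<omega>. cinner f (G \<omega>)) E (L f))"

definition unique_dual_cont_bessel ::
    "'w measure \<Rightarrow> ('a::complex_inner \<Rightarrow> 'a) \<Rightarrow> ('w \<Rightarrow> 'a) \<Rightarrow> bool" where
  "unique_dual_cont_bessel M L E \<longleftrightarrow> (\<exists>G. dual_cont_bessel M L E G) \<and>
     (\<forall>G1 G2. dual_cont_bessel M L E G1 \<and> dual_cont_bessel M L E G2
        \<longrightarrow> (AE \<omega> in M. G1 \<omega> = G2 \<omega>))"

definition L2_fun :: "'w measure \<Rightarrow> ('w \<Rightarrow> complex) \<Rightarrow> bool" where
  "L2_fun M \<phi> \<longleftrightarrow> \<phi> \<in> borel_measurable M \<and> integrable M (\<lambda>\<omega>. (cmod (\<phi> \<omega>))\<^sup>2)"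

definition cont_L2_independent :: "'w measure \<Rightarrow> ('w \<Rightarrow> 'a::complex_inner) \<Rightarrow> bool" where
  "cont_L2_independent M E \<longleftrightarrow>
     (\<forall>\<phi>. L2_fun M \<phi> \<and> weak_integral_is M \<phi> E 0 \<longrightarrow> (AE \<omega> in M. \<phi> \<omega> = 0))"

end

theory Submission
  imports Defs
begin

(* Since K has closed range, K K^+ is the orthogonal projection onto range K, and the Parseval
   identity forces the frame vectors to be a.e. orthogonal to the kernel of K^*, i.e. to lie in
   range K.  Hence an L^2 relation phi of F is the same as one of K^+ F: one direction applies
   the adjoint of K^+, the other tests with K^* h.  Polarizing the Parseval identity shows that F
   is a dual K^*-Bessel sequence of K^+ F.  A unique dual forces L^2-independence, since a
   nonzero relation would allow a rank-one perturbation of the dual; conversely, under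
   L^2-independence two duals have a.e. equal coefficients against every vector, hence by
   separability they agree a.e.  The existence of K^+ rests on the open mapping theorem for
   operators with closed range. *)

section \<open>Complex inner product spaces\<close>

lemma cinner_zero_left [simp]: "cinner 0 x = 0"
  using cinner_add_left[of 0 0 x] by simp

lemma cinner_zero_right [simp]: "cinner x 0 = 0"
  using cinner_commute[of x 0] by simp

lemma cinner_add_right: "cinner x (y + z) = cinner x y + cinner x z"
  using cinner_commute[of x "y + z"] cinner_commute[of x y] cinner_commute[of x z]
  by (simp add: cinner_add_left)

lemma cinner_minus_left: "cinner (- x) y = - cinner x y"
  using cinner_add_left[of x "- x" y] by (simp add: eq_neg_iff_add_eq_0 add.commute)

lemma cinner_diff_left: "cinner (x - y) z = cinner x z - cinner y z"
  using cinner_add_left[of x "- y" z] by (simp add: cinner_minus_left)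

lemma cinner_diff_right: "cinner x (y - z) = cinner x y - cinner x z"
  using cinner_commute[of x "y - z"] cinner_commute[of x y] cinner_commute[of x z]
  by (simp add: cinner_diff_left)

lemma cinner_scaleC_right: "cinner x (a *\<^sub>C y) = cnj a * cinner x y"
  using cinner_commute[of x "a *\<^sub>C y"] cinner_commute[of x y] by (simp add: cinner_scaleC_left)

lemma cinner_self_norm: "cinner x x = complex_of_real ((norm x)\<^sup>2)"
  using cinner_self_real[of x] norm_eq_sqrt_cinner[of x] cinner_self_nonneg[of x] by simp

lemma cinner_self_eq_0 [simp]: "cinner x x = 0 \<longleftrightarrow> x = 0"
  by (simp add: cinner_self_norm)

lemma cinner_eqI_left: "(\<And>z. cinner x z = cinner y z) \<Longrightarrow> x = y"
  by (metis cinner_diff_left cinner_self_eq_0 right_minus_eq)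

lemma cinner_eqI_right: "(\<And>z. cinner z x = cinner z y) \<Longrightarrow> x = y"
  by (metis cinner_commute cinner_eqI_left)

lemma scaleC_zero_left [simp]: "0 *\<^sub>C x = 0"
  using scaleR_scaleC[of 0 x] by simp

lemma scaleC_zero_right [simp]: "a *\<^sub>C 0 = 0"
  using scaleC_add_right[of a 0 0] by simp

lemma scaleC_minus_left: "(- a) *\<^sub>C x = - (a *\<^sub>C x)"
  using scaleC_add_left[of a "- a" x] by (simp add: eq_neg_iff_add_eq_0 add.commute)

lemma scaleC_diff_right: "a *\<^sub>C (x - y) = a *\<^sub>C x - a *\<^sub>C y"
  by (metis add_diff_cancel scaleC_add_right diff_add_cancel)

lemma norm_add_scaleC_squared:
  "(norm (x + c *\<^sub>C y))\<^sup>2 = (norm x)\<^sup>2 + 2 * Re (cnj c * cinner x y) + (cmod c)\<^sup>2 * (norm y)\<^sup>2"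
proof -
  have "complex_of_real ((norm (x + c *\<^sub>C y))\<^sup>2) = cinner (x + c *\<^sub>C y) (x + c *\<^sub>C y)"
    by (simp add: cinner_self_norm)
  also have "\<dots> = cinner x x + (cnj c * cinner x y + cnj (cnj c * cinner x y)) + c * cnj c * cinner y y"
    by (simp add: cinner_add_left cinner_add_right cinner_scaleC_left cinner_scaleC_right
        cinner_commute[of y x] algebra_simps)
  also have "\<dots> = complex_of_real ((norm x)\<^sup>2 + 2 * Re (cnj c * cinner x y) + (cmod c)\<^sup>2 * (norm y)\<^sup>2)"
    by (simp only: complex_add_cnj complex_norm_square[symmetric] cinner_self_norm of_real_add
        of_real_mult)
  finally show ?thesis
    by (simp only: of_real_eq_iff)
qed

lemma norm_add_squared: "(norm (x + y))\<^sup>2 = (norm x)\<^sup>2 + 2 * Re (cinner x y) + (norm y)\<^sup>2"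
  using norm_add_scaleC_squared[of x 1 y] by (simp add: scaleC_one)

lemma norm_diff_squared: "(norm (x - y))\<^sup>2 = (norm x)\<^sup>2 - 2 * Re (cinner x y) + (norm y)\<^sup>2"
  using norm_add_scaleC_squared[of x "- 1" y] by (simp add: scaleC_minus_left scaleC_one)

lemma parallelogram_law:
  fixes x y :: "'a::complex_inner"
  shows "(norm (x + y))\<^sup>2 + (norm (x - y))\<^sup>2 = 2 * (norm x)\<^sup>2 + 2 * (norm y)\<^sup>2"
  by (simp add: norm_add_squared norm_diff_squared)

lemma norm_scaleC: "norm (c *\<^sub>C x) = cmod c * norm x"
proof -
  have "(norm (c *\<^sub>C x))\<^sup>2 = (cmod c * norm x)\<^sup>2"
    using norm_add_scaleC_squared[of 0 c x] by (simp add: power_mult_distrib)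
  then show ?thesis
    by (simp add: power2_eq_iff_nonneg)
qed

lemma norm_diff_best_multiple_squared:
  assumes "y \<noteq> 0"
  shows "(norm (x - (cinner x y / complex_of_real ((norm y)\<^sup>2)) *\<^sub>C y))\<^sup>2
       = (norm x)\<^sup>2 - (cmod (cinner x y))\<^sup>2 / (norm y)\<^sup>2"
proof -
  let ?c = "cinner x y / complex_of_real ((norm y)\<^sup>2)"
  have diff: "x - ?c *\<^sub>C y = x + (- ?c) *\<^sub>C y"
    by (simp add: scaleC_minus_left)
  have inner: "cnj (- ?c) * cinner x y = - complex_of_real ((cmod (cinner x y))\<^sup>2 / (norm y)\<^sup>2)"
    by (simp add: complex_norm_square[symmetric] mult.commute)
  have coeff: "cmod (- ?c) = cmod (cinner x y) / (norm y)\<^sup>2"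
    by (simp add: norm_divide norm_power)
  show ?thesis
    unfolding diff norm_add_scaleC_squared inner coeff
    using assms by (simp add: field_simps power2_eq_square)
qed

lemma norm_cinner_le: "cmod (cinner x y) \<le> norm x * norm y"
proof (cases "y = 0")
  case False
  then have "(cmod (cinner x y))\<^sup>2 / (norm y)\<^sup>2 \<le> (norm x)\<^sup>2"
    using norm_diff_best_multiple_squared[of y x] zero_le_power2 by (metis diff_ge_0_iff_ge)
  then have "(cmod (cinner x y))\<^sup>2 \<le> (norm x * norm y)\<^sup>2"
    using False by (simp add: divide_le_eq power_mult_distrib)
  then show ?thesis
    by (rule power2_le_imp_le) simp
qed simp

lemma cinner_eq_0_if_norm_minimal:
  assumes "\<And>c. norm z \<le> norm (z - c *\<^sub>C v)"
  shows "cinner z v = 0"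
proof (cases "v = 0")
  case False
  let ?c = "cinner z v / complex_of_real ((norm v)\<^sup>2)"
  have "(norm z)\<^sup>2 \<le> (norm (z - ?c *\<^sub>C v))\<^sup>2"
    using assms[of ?c] by (rule power_mono) simp
  then have "(cmod (cinner z v))\<^sup>2 / (norm v)\<^sup>2 \<le> 0"
    unfolding norm_diff_best_multiple_squared[OF False] by simp
  then show ?thesis
    using False by (simp add: divide_le_0_iff)
qed simp

lemma sesquilinear_polarization:
  fixes B :: "'a::complex_inner \<Rightarrow> 'a \<Rightarrow> complex"
  assumes add_left: "\<And>x y z. B (x + y) z = B x z + B y z"
    and add_right: "\<And>x y z. B x (y + z) = B x y + B x z"
    and scale_left: "\<And>c x y. B (c *\<^sub>C x) y = c * B x y"
    and scale_right: "\<And>c x y. B x (c *\<^sub>C y) = cnj c * B x y"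
  shows "B x y = (B (x + y) (x + y) - B (x - y) (x - y)
                  + \<i> * B (x + \<i> *\<^sub>C y) (x + \<i> *\<^sub>C y) - \<i> * B (x - \<i> *\<^sub>C y) (x - \<i> *\<^sub>C y)) / 4"
proof -
  have diag: "B (x + c *\<^sub>C y) (x + c *\<^sub>C y) = B x x + cnj c * B x y + c * B y x + c * cnj c * B y y" for c
    by (simp add: add_left add_right scale_left scale_right algebra_simps)
  have "x + y = x + 1 *\<^sub>C y" "x - y = x + (- 1) *\<^sub>C y" "x - \<i> *\<^sub>C y = x + (- \<i>) *\<^sub>C y"
    by (simp_all add: scaleC_one scaleC_minus_left)
  then show ?thesis
    by (simp only: diag) (simp add: algebra_simps)
qed

lemma bounded_clinearI:
  assumes "\<And>x y. f (x + y) = f x + f y" "\<And>c x. f (c *\<^sub>C x) = c *\<^sub>C f x"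
    and "\<And>x. norm (f x) \<le> norm x * B"
  shows "bounded_clinear f"
  unfolding bounded_clinear_def
proof
  show "bounded_linear f"
    by (rule bounded_linear_intro[where K = B]) (use assms in \<open>auto simp: scaleR_scaleC\<close>)
qed (use assms in auto)

lemma bounded_clinear_bounded_linear: "bounded_clinear T \<Longrightarrow> bounded_linear T"
  by (simp add: bounded_clinear_def)

lemma bounded_clinear_scaleC: "bounded_clinear T \<Longrightarrow> T (c *\<^sub>C x) = c *\<^sub>C T x"
  by (simp add: bounded_clinear_def)

lemma bounded_clinear_add: "bounded_clinear T \<Longrightarrow> T (x + y) = T x + T y"
  by (rule linear_simps(1)[OF bounded_clinear_bounded_linear])

lemma bounded_clinear_diff: "bounded_clinear T \<Longrightarrow> T (x - y) = T x - T y"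
  by (rule linear_simps(2)[OF bounded_clinear_bounded_linear])

lemma bounded_clinear_zero: "bounded_clinear T \<Longrightarrow> T 0 = 0"
  by (rule linear_simps(3)[OF bounded_clinear_bounded_linear])

lemma bounded_clinear_pos_bounded: "bounded_clinear T \<Longrightarrow> \<exists>B>0. \<forall>x. norm (T x) \<le> norm x * B"
  using bounded_linear.pos_bounded[OF bounded_clinear_bounded_linear] by blast

section \<open>Orthogonal projections, Riesz representation and adjoints\<close>

definition csubspace :: "'a::complex_inner set \<Rightarrow> bool" where
  "csubspace V \<longleftrightarrow> 0 \<in> V \<and> (\<forall>x\<in>V. \<forall>y\<in>V. x + y \<in> V) \<and> (\<forall>c. \<forall>x\<in>V. c *\<^sub>C x \<in> V)"

lemma csubspace_0: "csubspace V \<Longrightarrow> 0 \<in> V"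
  by (simp add: csubspace_def)

lemma csubspace_add: "csubspace V \<Longrightarrow> x \<in> V \<Longrightarrow> y \<in> V \<Longrightarrow> x + y \<in> V"
  by (simp add: csubspace_def)

lemma csubspace_scaleC: "csubspace V \<Longrightarrow> x \<in> V \<Longrightarrow> c *\<^sub>C x \<in> V"
  by (simp add: csubspace_def)

lemma csubspace_diff:
  assumes "csubspace V" "x \<in> V" "y \<in> V"
  shows "x - y \<in> V"
proof -
  have "x - y = x + (- 1) *\<^sub>C y"
    by (simp add: scaleC_minus_left scaleC_one)
  then show ?thesis
    using assms by (metis csubspace_add csubspace_scaleC)
qed

lemma csubspace_scaleR: "csubspace V \<Longrightarrow> x \<in> V \<Longrightarrow> r *\<^sub>R x \<in> V"
  by (simp add: csubspace_scaleC scaleR_scaleC)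

lemma csubspace_range: "bounded_clinear T \<Longrightarrow> csubspace (range T)"
  unfolding csubspace_def
  by (auto simp: bounded_clinear_add[symmetric] bounded_clinear_scaleC[symmetric]
      bounded_clinear_zero[symmetric])

lemma csubspace_kernel: "bounded_clinear T \<Longrightarrow> csubspace {x. T x = 0}"
  by (simp add: csubspace_def bounded_clinear_zero bounded_clinear_add bounded_clinear_scaleC)

lemma closed_kernel: "bounded_clinear T \<Longrightarrow> closed {x. T x = 0}"
  using bounded_clinear_bounded_linear
  by (intro closed_Collect_eq continuous_on_const linear_continuous_on) auto

lemma minimizing_sequence_Cauchy:
  assumes V: "csubspace V" and vs: "\<And>n. vs n \<in> V"
    and D: "\<And>v. v \<in> V \<Longrightarrow> D \<le> (norm (y - v))\<^sup>2"
    and approx: "\<And>n. (norm (y - vs n))\<^sup>2 < D + 1 / real (Suc n)"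
  shows "Cauchy vs"
proof (rule metric_CauchyI)
  have dist_bound: "(norm (vs m - vs n))\<^sup>2 \<le> 2 / real (Suc m) + 2 / real (Suc n)" for m n
  proof -
    have "(1/2::real) *\<^sub>R (vs m + vs n) \<in> V"
      by (intro csubspace_scaleR csubspace_add V vs)
    then have "D \<le> (norm (y - (1/2::real) *\<^sub>R (vs m + vs n)))\<^sup>2"
      by (rule D)
    moreover have "(y - vs m) + (y - vs n) = 2 *\<^sub>R (y - (1/2::real) *\<^sub>R (vs m + vs n))"
      by (simp add: algebra_simps scaleR_2)
    moreover have "norm ((y - vs m) - (y - vs n)) = norm (vs m - vs n)"
      by (simp add: norm_minus_commute)
    ultimately have "(norm (vs m - vs n))\<^sup>2 \<le> 2 * (norm (y - vs m))\<^sup>2 + 2 * (norm (y - vs n))\<^sup>2 - 4 * D"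
      using parallelogram_law[of "y - vs m" "y - vs n"] by (simp add: power_mult_distrib)
    then show ?thesis
      using approx[of m] approx[of n] by linarith
  qed
  fix e :: real
  assume "e > 0"
  obtain N :: nat where N: "4 / e\<^sup>2 < real N"
    using reals_Archimedean2 by blast
  have "dist (vs m) (vs n) < e" if "N \<le> m" "N \<le> n" for m n
  proof -
    have "4 / e\<^sup>2 < real (Suc m)" "4 / e\<^sup>2 < real (Suc n)"
      using N that by auto
    then have "2 / real (Suc m) < e\<^sup>2 / 2" "2 / real (Suc n) < e\<^sup>2 / 2"
      using \<open>e > 0\<close> by (auto simp: field_simps)
    then have "(norm (vs m - vs n))\<^sup>2 < e\<^sup>2"
      using dist_bound[of m n] by linarith
    then show ?thesis
      using \<open>e > 0\<close> by (simp add: dist_norm power_less_imp_less_base)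
  qed
  then show "\<exists>M. \<forall>m\<ge>M. \<forall>n\<ge>M. dist (vs m) (vs n) < e"
    by blast
qed

lemma closed_csubspace_nearest_point:
  fixes V :: "'a::chilbert_space set"
  assumes V: "csubspace V" "closed V"
  shows "\<exists>p\<in>V. \<forall>v\<in>V. norm (y - p) \<le> norm (y - v)"
proof -
  define D where "D = (INF v\<in>V. (norm (y - v))\<^sup>2)"
  have bdd: "bdd_below ((\<lambda>v. (norm (y - v))\<^sup>2) ` V)"
    by (rule bdd_belowI[of _ 0]) auto
  have D_le: "D \<le> (norm (y - v))\<^sup>2" if "v \<in> V" for v
    unfolding D_def using bdd that by (rule cINF_lower)
  have "\<exists>v\<in>V. (norm (y - v))\<^sup>2 < D + 1 / real (Suc n)" for n
    using cInf_lessD[of "(\<lambda>v. (norm (y - v))\<^sup>2) ` V" "D + 1 / real (Suc n)"] csubspace_0[OF V(1)]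
    unfolding D_def by auto
  then obtain vs where vs: "\<And>n. vs n \<in> V" and approx: "\<And>n. (norm (y - vs n))\<^sup>2 < D + 1 / real (Suc n)"
    by metis
  obtain p where lim: "vs \<longlonglongrightarrow> p"
    using minimizing_sequence_Cauchy[OF V(1) vs D_le approx] Cauchy_convergent_iff convergent_def
    by blast
  have "p \<in> V"
    using V(2) vs lim closed_sequentially by blast
  have "(\<lambda>n. (norm (y - vs n))\<^sup>2) \<longlonglongrightarrow> (norm (y - p))\<^sup>2"
    by (intro tendsto_intros lim)
  moreover have "(\<lambda>n. D + 1 / real (Suc n)) \<longlonglongrightarrow> D + 0"
    by (intro tendsto_intros LIMSEQ_Suc[OF lim_1_over_n])
  ultimately have p_min: "(norm (y - p))\<^sup>2 \<le> D"
    using approx by (intro LIMSEQ_le[where X = "\<lambda>n. (norm (y - vs n))\<^sup>2"]) (auto intro: less_imp_le)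
  have "norm (y - p) \<le> norm (y - v)" if "v \<in> V" for v
  proof (rule power2_le_imp_le)
    show "(norm (y - p))\<^sup>2 \<le> (norm (y - v))\<^sup>2"
      using p_min D_le[OF that] by linarith
  qed simp
  with \<open>p \<in> V\<close> show ?thesis
    by blast
qed

definition orth_proj :: "'a::complex_inner set \<Rightarrow> 'a \<Rightarrow> 'a" where
  "orth_proj V y = (SOME p. p \<in> V \<and> (\<forall>v\<in>V. cinner (y - p) v = 0))"

context
  fixes V :: "'a::chilbert_space set"
  assumes V: "csubspace V" "closed V"
begin

lemma orth_proj_exists: "\<exists>p\<in>V. \<forall>v\<in>V. cinner (y - p) v = 0"
proof -
  obtain p where p: "p \<in> V" and near: "\<And>v. v \<in> V \<Longrightarrow> norm (y - p) \<le> norm (y - v)"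
    using closed_csubspace_nearest_point[OF V] by blast
  have "cinner (y - p) v = 0" if "v \<in> V" for v
  proof (rule cinner_eq_0_if_norm_minimal)
    fix c
    have "p + c *\<^sub>C v \<in> V"
      by (intro csubspace_add csubspace_scaleC V p that)
    then show "norm (y - p) \<le> norm (y - p - c *\<^sub>C v)"
      using near by (simp only: diff_diff_eq)
  qed
  with p show ?thesis
    by blast
qed

lemma orth_proj_in: "orth_proj V y \<in> V"
  and orth_proj_orth: "v \<in> V \<Longrightarrow> cinner (y - orth_proj V y) v = 0"
  using someI_ex[OF orth_proj_exists[unfolded Bex_def]] unfolding orth_proj_def by blast+

lemma orth_proj_eqI:
  assumes "p \<in> V" and "\<And>v. v \<in> V \<Longrightarrow> cinner (y - p) v = 0"
  shows "orth_proj V y = p"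
proof -
  have "orth_proj V y - p \<in> V"
    by (intro csubspace_diff V orth_proj_in assms)
  then have "cinner (orth_proj V y - p) (orth_proj V y - p) = 0"
    using assms(2) orth_proj_orth cinner_diff_left[of "y - p" "y - orth_proj V y"] by simp
  then show ?thesis
    by simp
qed

lemma orth_proj_id: "y \<in> V \<Longrightarrow> orth_proj V y = y"
  by (rule orth_proj_eqI) auto

lemma orth_proj_add: "orth_proj V (x + y) = orth_proj V x + orth_proj V y"
proof (rule orth_proj_eqI)
  show "orth_proj V x + orth_proj V y \<in> V"
    by (intro csubspace_add V orth_proj_in)
  fix v
  assume "v \<in> V"
  have "cinner (x + y - (orth_proj V x + orth_proj V y)) v
      = cinner (x - orth_proj V x) v + cinner (y - orth_proj V y) v"
    by (metis add_diff_add cinner_add_left)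
  then show "cinner (x + y - (orth_proj V x + orth_proj V y)) v = 0"
    using orth_proj_orth[OF \<open>v \<in> V\<close>] by simp
qed

lemma orth_proj_scaleC: "orth_proj V (c *\<^sub>C x) = c *\<^sub>C orth_proj V x"
proof (rule orth_proj_eqI)
  show "c *\<^sub>C orth_proj V x \<in> V"
    by (intro csubspace_scaleC V orth_proj_in)
  fix v
  assume "v \<in> V"
  then show "cinner (c *\<^sub>C x - c *\<^sub>C orth_proj V x) v = 0"
    using orth_proj_orth[of v x] by (simp add: scaleC_diff_right[symmetric] cinner_scaleC_left)
qed

lemma cinner_orth_proj_right: "cinner x (orth_proj V y) = cinner (orth_proj V x) (orth_proj V y)"
  using orth_proj_orth[OF orth_proj_in, of x y] by (simp add: cinner_diff_left)

lemma orth_proj_self_adjoint: "cinner (orth_proj V x) y = cinner x (orth_proj V y)"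
  using cinner_orth_proj_right[of y x] cinner_orth_proj_right[of x y]
  by (metis cinner_commute)

lemma orth_proj_pythagoras: "(norm y)\<^sup>2 = (norm (orth_proj V y))\<^sup>2 + (norm (y - orth_proj V y))\<^sup>2"
proof -
  have "cinner (orth_proj V y) (y - orth_proj V y) = 0"
    using orth_proj_orth[OF orth_proj_in, of y y] by (metis cinner_commute complex_cnj_zero)
  then show ?thesis
    using norm_add_squared[of "orth_proj V y" "y - orth_proj V y"] by simp
qed

lemma norm_orth_proj_le: "norm (orth_proj V y) \<le> norm y"
proof (rule power2_le_imp_le)
  show "(norm (orth_proj V y))\<^sup>2 \<le> (norm y)\<^sup>2"
    using orth_proj_pythagoras[of y] by simp
qed simp

lemma norm_diff_orth_proj_le: "norm (y - orth_proj V y) \<le> norm y"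
proof (rule power2_le_imp_le)
  show "(norm (y - orth_proj V y))\<^sup>2 \<le> (norm y)\<^sup>2"
    using orth_proj_pythagoras[of y] by simp
qed simp

end

lemma riesz_representation:
  fixes f :: "'a::chilbert_space \<Rightarrow> complex"
  assumes add: "\<And>x y. f (x + y) = f x + f y"
    and scale: "\<And>c x. f (c *\<^sub>C x) = c * f x"
    and bound: "\<And>x. cmod (f x) \<le> B * norm x"
  shows "\<exists>w. \<forall>x. f x = cinner x w"
proof (cases "\<forall>x. f x = 0")
  case False
  then obtain z where fz: "f z \<noteq> 0"
    by blast
  have f0: "f 0 = 0"
    using scale[of 0 0] by simp
  have f_diff: "f (x - y) = f x - f y" for x y
    using add[of "x - y" y] by simp
  define N where "N = {x. f x = 0}"
  have N: "csubspace N"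
    unfolding N_def csubspace_def using f0 add scale by auto
  have "bounded_linear f"
  proof (rule bounded_linear_intro[where K = "max B 0"])
    show "f (r *\<^sub>R x) = r *\<^sub>R f x" for r x
      using scale[of "complex_of_real r" x] by (simp add: scaleR_scaleC scaleR_conv_of_real)
    show "norm (f x) \<le> norm x * max B 0" for x
      using bound[of x] mult_right_mono[of B "max B 0" "norm x"] by (simp add: mult.commute)
  qed (rule add)
  then have "closed N"
    unfolding N_def by (intro closed_Collect_eq continuous_on_const linear_continuous_on) auto
  define u where "u = z - orth_proj N z"
  have fu: "f u = f z"
    using orth_proj_in[OF N \<open>closed N\<close>, of z] by (simp add: u_def f_diff N_def)
  have u_orth: "n \<in> N \<Longrightarrow> cinner u n = 0" for n
    unfolding u_def by (rule orth_proj_orth[OF N \<open>closed N\<close>])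
  have "u \<noteq> 0"
    using fu fz f0 by auto
  show ?thesis
  proof (intro exI allI)
    fix x
    have "x - (f x / f u) *\<^sub>C u \<in> N"
      using fz fu by (simp add: N_def f_diff scale)
    then have "cinner u (x - (f x / f u) *\<^sub>C u) = 0"
      by (rule u_orth)
    then have "cinner x u = (f x / f u) * complex_of_real ((norm u)\<^sup>2)"
      by (metis cinner_commute cinner_diff_left cinner_scaleC_left cinner_self_norm complex_cnj_zero
          eq_iff_diff_eq_0)
    then show "f x = cinner x ((cnj (f u) / complex_of_real ((norm u)\<^sup>2)) *\<^sub>C u)"
      using fz fu \<open>u \<noteq> 0\<close> by (simp add: cinner_scaleC_right field_simps)
  qed
qed (auto intro: exI[of _ 0])

lemma cadjoint_exists:
  fixes T :: "'a::chilbert_space \<Rightarrow> 'b::complex_inner"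
  assumes T: "bounded_clinear T"
  shows "\<exists>S. \<forall>x y. cinner (T x) y = cinner x (S y)"
proof -
  obtain B where B: "\<And>x. norm (T x) \<le> norm x * B"
    using bounded_clinear_pos_bounded[OF T] by blast
  have "\<exists>w. \<forall>x. cinner (T x) y = cinner x w" for y
  proof (rule riesz_representation[where B = "B * norm y"])
    show "cmod (cinner (T x) y) \<le> B * norm y * norm x" for x
      using norm_cinner_le[of "T x" y] mult_right_mono[OF B[of x], of "norm y"]
      by (simp add: ac_simps)
  qed (simp_all add: bounded_clinear_add[OF T] bounded_clinear_scaleC[OF T] cinner_add_left
      cinner_scaleC_left)
  then show ?thesis
    by metis
qed

lemma cadjoint_works:
  fixes T :: "'a::chilbert_space \<Rightarrow> 'b::complex_inner"
  assumes "bounded_clinear T"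
  shows "cinner (T x) y = cinner x (cadjoint T y)"
proof -
  have unique: "\<exists>!S. \<forall>x y. cinner (T x) y = cinner x (S y)"
  proof (rule ex_ex1I)
    fix S1 S2
    assume "\<forall>x y. cinner (T x) y = cinner x (S1 y)" "\<forall>x y. cinner (T x) y = cinner x (S2 y)"
    then show "S1 = S2"
      by (intro ext cinner_eqI_right) metis
  qed (rule cadjoint_exists[OF assms])
  show ?thesis
    unfolding cadjoint_def using theI'[OF unique] by blast
qed

lemma bounded_clinear_cadjoint:
  fixes T :: "'a::chilbert_space \<Rightarrow> 'b::complex_inner"
  assumes T: "bounded_clinear T"
  shows "bounded_clinear (cadjoint T)"
proof -
  obtain B where B: "B > 0" "\<And>x. norm (T x) \<le> norm x * B"
    using bounded_clinear_pos_bounded[OF T] by blast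
  let ?A = "cadjoint T"
  show ?thesis
  proof (rule bounded_clinearI[where B = B])
    show "?A (x + y) = ?A x + ?A y" for x y
      by (rule cinner_eqI_right) (simp add: cadjoint_works[OF T, symmetric] cinner_add_right)
    show "?A (c *\<^sub>C x) = c *\<^sub>C ?A x" for c x
      by (rule cinner_eqI_right) (simp add: cadjoint_works[OF T, symmetric] cinner_scaleC_right)
    show "norm (?A y) \<le> norm y * B" for y
    proof -
      have "(norm (?A y))\<^sup>2 = cmod (cinner (T (?A y)) y)"
        by (simp add: cadjoint_works[OF T] cinner_self_norm norm_power)
      also have "\<dots> \<le> norm (?A y) * B * norm y"
        using norm_cinner_le[of "T (?A y)" y] mult_right_mono[OF B(2)[of "?A y"], of "norm y"]
        by simp
      finally have "norm (?A y) * norm (?A y) \<le> norm (?A y) * (norm y * B)"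
        by (simp add: power2_eq_square ac_simps)
      then show ?thesis
        using B(1) by (cases "?A y = 0") auto
    qed
  qed
qed

section \<open>Operators with closed range and the pseudo-inverse\<close>

subclass (in chilbert_space) banach ..

lemma range_subset_closure_image_balls:
  fixes K :: "'a::real_normed_vector \<Rightarrow> 'b::topological_space"
  shows "range K \<subseteq> (\<Union>n::nat. closure (K ` ball 0 (real n)))"
proof
  fix y
  assume "y \<in> range K"
  then obtain x where "y = K x"
    by blast
  obtain n :: nat where "norm x < real n"
    using reals_Archimedean2 by blast
  then have "y \<in> K ` ball 0 (real n)"
    using \<open>y = K x\<close> by simp
  then have "y \<in> closure (K ` ball 0 (real n))"
    by (rule subsetD[OF closure_subset])
  then show "y \<in> (\<Union>n::nat. closure (K ` ball 0 (real n)))"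
    by blast
qed

lemma closed_range_Baire:
  fixes K :: "'a::banach \<Rightarrow> 'b::banach"
  assumes "bounded_linear K" and "closed (range K)"
  shows "\<exists>n::nat. \<exists>y0\<in>range K. \<exists>e>0.
           \<forall>y\<in>range K. dist y y0 < e \<longrightarrow> y \<in> closure (K ` ball 0 (real n))"
proof -
  let ?R = "range K"
  let ?X = "top_of_set ?R"
  define T where "T n = ?R \<inter> closure (K ` ball 0 (real n))" for n
  have "\<exists>n. ?X interior_of T n \<noteq> {}"
  proof (rule ccontr)
    assume "\<not> ?thesis"
    then have no_interior: "\<And>n. ?X interior_of T n = {}"
      by blast
    have "?X interior_of \<Union>(range T) = {}"
    proof (rule Baire_category_alt)
      show "completely_metrizable_space ?X \<or> locally_compact_space ?X \<and> regular_space ?X"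
        using assms(2) closed_closedin
        by (blast intro: completely_metrizable_space_closedin completely_metrizable_space_euclidean)
      fix S
      assume "S \<in> range T"
      then show "closedin ?X S \<and> ?X interior_of S = {}"
        using no_interior unfolding T_def by (auto intro: closedin_closed_Int)
    qed simp
    moreover have "\<Union>(range T) = ?R"
      using range_subset_closure_image_balls[of K] unfolding T_def by blast
    ultimately show False
      using interior_of_topspace[of ?X] by simp
  qed
  then obtain n y0 where "y0 \<in> ?X interior_of T n"
    by blast
  then obtain U where U: "openin ?X U" "y0 \<in> U" "U \<subseteq> T n"
    unfolding interior_of_def by blast
  then obtain e where "e > 0" "\<And>y. y \<in> ?R \<Longrightarrow> dist y y0 < e \<Longrightarrow> y \<in> U"
    unfolding openin_euclidean_subtopology_iff by blast
  moreover have "y0 \<in> ?R"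
    using U openin_subset by fastforce
  ultimately show ?thesis
    using U(3) unfolding T_def by blast
qed

lemma closed_range_approximate_small_preimages:
  fixes K :: "'a::banach \<Rightarrow> 'b::banach"
  assumes "bounded_linear K" and "closed (range K)"
  shows "\<exists>r e. e > 0 \<and> (\<forall>y\<in>range K. norm y < e \<longrightarrow>
           (\<forall>\<eta>>0. \<exists>x. norm x < r \<and> norm (y - K x) < \<eta>))"
proof -
  interpret K: bounded_linear K
    by (rule assms(1))
  obtain n :: nat and y0 e where y0: "y0 \<in> range K" and "e > 0"
    and cover: "\<And>y. y \<in> range K \<Longrightarrow> dist y y0 < e \<Longrightarrow> y \<in> closure (K ` ball 0 (real n))"
    using closed_range_Baire[OF assms] by blast
  have "\<exists>x. norm x < 2 * real n \<and> norm (y - K x) < \<eta>"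
    if y: "y \<in> range K" "norm y < e" and "\<eta> > 0" for y \<eta>
  proof -
    \<comment> \<open>approximate both \<open>y0 + y\<close> and \<open>y0\<close> from the image of the ball, and subtract\<close>
    obtain a b where "y0 = K a" "y = K b"
      using y0 y by blast
    then have "y0 + y \<in> range K"
      by (metis K.add rangeI)
    then have "y0 + y \<in> closure (K ` ball 0 (real n))"
      using y by (intro cover) (simp_all add: dist_norm)
    then obtain xa where xa: "norm xa < real n" "dist (K xa) (y0 + y) < \<eta> / 2"
      using \<open>\<eta> > 0\<close> unfolding closure_approachable by (metis half_gt_zero imageE mem_ball_0)
    have "y0 \<in> closure (K ` ball 0 (real n))"
      using y0 \<open>e > 0\<close> by (intro cover) simp_all
    then obtain xb where xb: "norm xb < real n" "dist (K xb) y0 < \<eta> / 2"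
      using \<open>\<eta> > 0\<close> unfolding closure_approachable by (metis half_gt_zero imageE mem_ball_0)
    have "norm (xa - xb) < 2 * real n"
      using norm_triangle_ineq4[of xa xb] xa(1) xb(1) by linarith
    moreover have "norm (y - K (xa - xb)) < \<eta>"
    proof -
      have "y - K (xa - xb) = (y0 + y - K xa) - (y0 - K xb)"
        by (simp add: K.diff algebra_simps)
      then have "norm (y - K (xa - xb)) \<le> norm (y0 + y - K xa) + norm (y0 - K xb)"
        by (metis norm_triangle_ineq4)
      moreover have "norm (y0 + y - K xa) < \<eta> / 2" "norm (y0 - K xb) < \<eta> / 2"
        using xa(2) xb(2) by (simp_all add: dist_norm norm_minus_commute)
      ultimately show ?thesis
        by linarith
    qed
    ultimately show ?thesis
      by blast
  qed
  with \<open>e > 0\<close> show ?thesis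
    by blast
qed

lemma closed_range_halving_preimages:
  fixes K :: "'a::banach \<Rightarrow> 'b::banach"
  assumes "bounded_linear K" and "closed (range K)"
  shows "\<exists>c\<ge>0. \<forall>y\<in>range K. \<exists>x. norm x \<le> c * norm y \<and> norm (y - K x) \<le> norm y / 2"
proof -
  interpret K: bounded_linear K
    by (rule assms(1))
  obtain r e where "e > 0"
    and approx: "\<And>y \<eta>. y \<in> range K \<Longrightarrow> norm y < e \<Longrightarrow> \<eta> > 0 \<Longrightarrow>
                   \<exists>x. norm x < r \<and> norm (y - K x) < \<eta>"
    using closed_range_approximate_small_preimages[OF assms] by blast
  have "\<exists>x. norm x \<le> (2 * max r 0 / e) * norm y \<and> norm (y - K x) \<le> norm y / 2"
    if "y \<in> range K" "y \<noteq> 0" for y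
  proof -
    \<comment> \<open>rescale \<open>y\<close> to norm \<open>e/2\<close>, approximate it within \<open>e/4\<close>, and scale back\<close>
    define t where "t = e / (2 * norm y)"
    have "t > 0"
      using \<open>e > 0\<close> \<open>y \<noteq> 0\<close> by (simp add: t_def)
    obtain a where "y = K a"
      using \<open>y \<in> range K\<close> by blast
    then have "t *\<^sub>R y \<in> range K"
      by (metis K.scaleR rangeI)
    moreover have "norm (t *\<^sub>R y) < e"
      using \<open>t > 0\<close> \<open>e > 0\<close> \<open>y \<noteq> 0\<close> by (simp add: t_def)
    ultimately obtain x' where x': "norm x' < r" "norm (t *\<^sub>R y - K x') < e / 4"
      using approx \<open>e > 0\<close> by (metis divide_pos_pos zero_less_numeral)
    have "norm ((1 / t) *\<^sub>R x') = norm x' / t"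
      using \<open>t > 0\<close> by simp
    also have "\<dots> \<le> max r 0 / t"
      using x'(1) \<open>t > 0\<close> by (simp add: divide_right_mono)
    also have "\<dots> = (2 * max r 0 / e) * norm y"
      using \<open>e > 0\<close> \<open>y \<noteq> 0\<close> by (simp add: t_def field_simps)
    finally have x_bound: "norm ((1 / t) *\<^sub>R x') \<le> (2 * max r 0 / e) * norm y" .
    have "y - K ((1 / t) *\<^sub>R x') = (1 / t) *\<^sub>R (t *\<^sub>R y - K x')"
      using \<open>t > 0\<close> by (simp add: K.scaleR algebra_simps)
    then have "norm (y - K ((1 / t) *\<^sub>R x')) = norm (t *\<^sub>R y - K x') / t"
      using \<open>t > 0\<close> by simp
    also have "\<dots> \<le> (e / 4) / t"
      by (rule divide_right_mono) (use x'(2) \<open>t > 0\<close> in auto)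
    also have "\<dots> = norm y / 2"
      using \<open>e > 0\<close> \<open>y \<noteq> 0\<close> by (simp add: t_def field_simps)
    finally show ?thesis
      using x_bound by blast
  qed
  moreover have "2 * max r 0 / e \<ge> 0"
    using \<open>e > 0\<close> by simp
  moreover have "\<exists>x. norm x \<le> c * norm y \<and> norm (y - K x) \<le> norm y / 2" if "y = 0" for c y
    using that by (intro exI[of _ 0]) (simp add: K.zero)
  ultimately show ?thesis
    by blast
qed

lemma bounded_linear_telescoping_series:
  fixes K :: "'a::banach \<Rightarrow> 'b::real_normed_vector"
  assumes "bounded_linear K" and "summable (\<lambda>k. norm (xs k))" and "ys \<longlonglongrightarrow> 0"
    and "\<And>k. K (xs k) = ys k - ys (Suc k)"
  shows "K (suminf xs) = ys 0"
proof -
  have "(\<lambda>k. K (xs k)) sums K (suminf xs)"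
    by (rule bounded_linear.sums[OF assms(1) summable_sums[OF summable_norm_cancel[OF assms(2)]]])
  moreover have "(\<lambda>k. K (xs k)) sums (ys 0 - 0)"
    unfolding assms(4) by (rule telescope_sums'[OF assms(3)])
  ultimately show ?thesis
    using sums_unique2 by fastforce
qed

lemma preimage_by_iterated_halving:
  fixes K :: "'a::banach \<Rightarrow> 'b::banach"
  assumes "bounded_linear K" and "c \<ge> 0" and "y \<in> range K"
    and g: "\<And>y. y \<in> range K \<Longrightarrow> norm (g y) \<le> c * norm y"
    and g_half: "\<And>y. y \<in> range K \<Longrightarrow> norm (y - K (g y)) \<le> norm y / 2"
  shows "\<exists>x. K x = y \<and> norm x \<le> 2 * c * norm y"
proof -
  interpret K: bounded_linear K
    by (rule assms(1))
  \<comment> \<open>the remainders \<open>ys k\<close> at least halve at each step, so the corrections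
     \<open>g (ys k)\<close> sum to a preimage of \<open>y\<close>\<close>
  define ys where "ys k = ((\<lambda>z. z - K (g z)) ^^ k) y" for k
  have ys_Suc: "ys (Suc k) = ys k - K (g (ys k))" for k
    by (simp add: ys_def)
  have ys_range: "ys k \<in> range K" for k
  proof (induction k)
    case (Suc k)
    then obtain a where "ys k = K a"
      by blast
    then have "ys (Suc k) = K (a - g (ys k))"
      by (simp add: ys_Suc K.diff)
    then show ?case
      by simp
  qed (use \<open>y \<in> range K\<close> in \<open>simp add: ys_def\<close>)
  have ys_bound: "norm (ys k) \<le> norm y * (1/2) ^ k" for k
  proof (induction k)
    case (Suc k)
    then show ?case
      using g_half[OF ys_range[of k]] by (simp add: ys_Suc)
  qed (simp add: ys_def)
  define xs where "xs k = g (ys k)" for k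
  have xs_bound: "norm (xs k) \<le> c * norm y * (1/2) ^ k" for k
  proof -
    have "norm (xs k) \<le> c * norm (ys k)"
      unfolding xs_def by (rule g[OF ys_range])
    also have "\<dots> \<le> c * (norm y * (1/2) ^ k)"
      by (rule mult_left_mono[OF ys_bound \<open>c \<ge> 0\<close>])
    finally show ?thesis
      by (simp add: ac_simps)
  qed
  have geometric: "summable (\<lambda>k. c * norm y * (1/2::real) ^ k)"
    by (intro summable_mult summable_geometric) simp
  have summable_xs: "summable (\<lambda>k. norm (xs k))"
    by (rule summable_comparison_test[OF _ geometric]) (use xs_bound in auto)
  have "norm (suminf xs) \<le> (\<Sum>k. norm (xs k))"
    by (rule summable_norm[OF summable_xs])
  also have "\<dots> \<le> (\<Sum>k. c * norm y * (1/2::real) ^ k)"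
    by (rule suminf_le[OF xs_bound summable_xs geometric])
  also have "\<dots> = 2 * c * norm y"
    by (simp add: suminf_mult suminf_geometric)
  finally have norm_sum: "norm (suminf xs) \<le> 2 * c * norm y" .
  have "ys \<longlonglongrightarrow> 0"
    by (rule Lim_null_comparison[OF always_eventually[OF allI[OF ys_bound]]])
      (intro tendsto_mult_right_zero LIMSEQ_power_zero, simp)
  moreover have "K (xs k) = ys k - ys (Suc k)" for k
    by (simp add: xs_def ys_Suc)
  ultimately have "K (suminf xs) = ys 0"
    by (rule bounded_linear_telescoping_series[OF assms(1) summable_xs])
  then have "K (suminf xs) = y"
    by (simp add: ys_def)
  with norm_sum show ?thesis
    by blast
qed

lemma closed_range_bounded_preimages:
  fixes K :: "'a::banach \<Rightarrow> 'b::banach"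
  assumes "bounded_linear K" and "closed (range K)"
  shows "\<exists>C. \<forall>y\<in>range K. \<exists>x. K x = y \<and> norm x \<le> C * norm y"
proof -
  obtain c where "c \<ge> 0"
    and "\<forall>y\<in>range K. \<exists>x. norm x \<le> c * norm y \<and> norm (y - K x) \<le> norm y / 2"
    using closed_range_halving_preimages[OF assms] by blast
  then obtain g where "\<And>y. y \<in> range K \<Longrightarrow> norm (g y) \<le> c * norm y"
    and "\<And>y. y \<in> range K \<Longrightarrow> norm (y - K (g y)) \<le> norm y / 2"
    by metis
  then have "\<exists>x. K x = y \<and> norm x \<le> 2 * c * norm y" if "y \<in> range K" for y
    using preimage_by_iterated_halving[OF assms(1) \<open>c \<ge> 0\<close> that] by blast
  then show ?thesis
    by blast
qed

definition is_pinv :: "('a::complex_inner \<Rightarrow> 'a) \<Rightarrow> ('a \<Rightarrow> 'a) \<Rightarrow> bool" where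
  "is_pinv K L \<longleftrightarrow> bounded_clinear L
       \<and> (\<forall>x. K (L (K x)) = K x)
       \<and> (\<forall>x. L (K (L x)) = L x)
       \<and> (\<forall>x y. cinner (K (L x)) y = cinner x (K (L y)))
       \<and> (\<forall>x y. cinner (L (K x)) y = cinner x (L (K y)))"

lemma is_pinv_unique:
  assumes "is_pinv K L1" and "is_pinv K L2"
  shows "L1 = L2"
proof -
  have 1: "K (L1 (K x)) = K x" "L1 (K (L1 x)) = L1 x"
    "cinner (K (L1 x)) y = cinner x (K (L1 y))" "cinner (L1 (K x)) y = cinner x (L1 (K y))" for x y
    using assms(1) unfolding is_pinv_def by blast+
  have 2: "K (L2 (K x)) = K x" "L2 (K (L2 x)) = L2 x"
    "cinner (K (L2 x)) y = cinner x (K (L2 y))" "cinner (L2 (K x)) y = cinner x (L2 (K y))" for x y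
    using assms(2) unfolding is_pinv_def by blast+
  have KL: "K (L1 x) = K (L2 x)" for x
  proof (rule cinner_eqI_left)
    fix y
    have "cinner (K (L1 x)) y = cinner (K (L2 (K (L1 x)))) y"
      by (simp only: 2(1))
    also have "\<dots> = cinner x (K (L1 (K (L2 y))))"
      by (simp only: 1(3) 2(3))
    also have "\<dots> = cinner (K (L2 x)) y"
      by (simp only: 1(1) 2(3))
    finally show "cinner (K (L1 x)) y = cinner (K (L2 x)) y" .
  qed
  have LK: "L1 (K x) = L2 (K x)" for x
  proof (rule cinner_eqI_left)
    fix y
    have "cinner (L1 (K x)) y = cinner (L1 (K (L2 (K x)))) y"
      by (simp only: 2(1))
    also have "\<dots> = cinner x (L2 (K (L1 (K y))))"
      by (simp only: 1(4) 2(4))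
    also have "\<dots> = cinner (L2 (K x)) y"
      by (simp only: 1(1) 2(4))
    finally show "cinner (L1 (K x)) y = cinner (L2 (K x)) y" .
  qed
  show ?thesis
  proof
    fix y
    have "L1 y = L1 (K (L1 y))"
      by (simp only: 1(2))
    also have "\<dots> = L2 (K (L2 y))"
      by (simp only: KL LK)
    also have "\<dots> = L2 y"
      by (simp only: 2(2))
    finally show "L1 y = L2 y" .
  qed
qed

lemma kernel_orth_eqI:
  assumes "bounded_clinear K" and "K x1 = K x2"
    and "\<forall>n. K n = 0 \<longrightarrow> cinner x1 n = 0" and "\<forall>n. K n = 0 \<longrightarrow> cinner x2 n = 0"
  shows "x1 = x2"
proof -
  have "K (x1 - x2) = 0"
    using assms(1,2) by (simp add: bounded_clinear_diff)
  then have "cinner (x1 - x2) (x1 - x2) = 0"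
    using assms(3,4) by (simp add: cinner_diff_left)
  then show ?thesis
    by simp
qed

definition min_norm_solution :: "('a::complex_inner \<Rightarrow> 'a) \<Rightarrow> 'a \<Rightarrow> 'a" where
  "min_norm_solution K y =
     (THE x. K x = orth_proj (range K) y \<and> (\<forall>n. K n = 0 \<longrightarrow> cinner x n = 0))"

context
  fixes K :: "'a::chilbert_space \<Rightarrow> 'a"
  assumes K: "bounded_clinear K" and closed_range: "closed (range K)"
begin

lemma closed_range_orth_preimages:
  "\<exists>C\<ge>0. \<forall>y\<in>range K. \<exists>x. K x = y \<and> (\<forall>n. K n = 0 \<longrightarrow> cinner x n = 0) \<and> norm x \<le> C * norm y"
proof -
  let ?N = "{n. K n = 0}"
  obtain C where C: "\<And>y. y \<in> range K \<Longrightarrow> \<exists>x. K x = y \<and> norm x \<le> C * norm y"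
    using closed_range_bounded_preimages[OF bounded_clinear_bounded_linear[OF K] closed_range] by blast
  have "\<exists>x. K x = y \<and> (\<forall>n. K n = 0 \<longrightarrow> cinner x n = 0) \<and> norm x \<le> max C 0 * norm y"
    if y: "y \<in> range K" for y
  proof -
    obtain x0 where x0: "K x0 = y" "norm x0 \<le> C * norm y"
      using C[OF y] by blast
    let ?x = "x0 - orth_proj ?N x0"
    have "K ?x = y"
      using orth_proj_in[OF csubspace_kernel[OF K] closed_kernel[OF K], of x0] x0(1)
      by (simp add: bounded_clinear_diff[OF K])
    moreover have "\<forall>n. K n = 0 \<longrightarrow> cinner ?x n = 0"
      using orth_proj_orth[OF csubspace_kernel[OF K] closed_kernel[OF K]] by simp
    moreover have "norm ?x \<le> max C 0 * norm y"
      using norm_diff_orth_proj_le[OF csubspace_kernel[OF K] closed_kernel[OF K], of x0] x0(2)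
        mult_right_mono[of C "max C 0" "norm y"] by simp
    ultimately show ?thesis
      by blast
  qed
  then show ?thesis
    by (intro exI[of _ "max C 0"]) simp
qed

lemma min_norm_solution_eqI:
  assumes "K x = orth_proj (range K) y" and "\<forall>n. K n = 0 \<longrightarrow> cinner x n = 0"
  shows "min_norm_solution K y = x"
  unfolding min_norm_solution_def
proof (rule the_equality)
  fix x'
  assume "K x' = orth_proj (range K) y \<and> (\<forall>n. K n = 0 \<longrightarrow> cinner x' n = 0)"
  then show "x' = x"
    using assms kernel_orth_eqI[OF K, of x' x] by simp
qed (use assms in blast)

lemma min_norm_solution:
  "K (min_norm_solution K y) = orth_proj (range K) y"
  "\<forall>n. K n = 0 \<longrightarrow> cinner (min_norm_solution K y) n = 0"
proof -
  obtain x where "K x = orth_proj (range K) y" "\<forall>n. K n = 0 \<longrightarrow> cinner x n = 0"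
    using closed_range_orth_preimages orth_proj_in[OF csubspace_range[OF K] closed_range] by blast
  then show "K (min_norm_solution K y) = orth_proj (range K) y"
    "\<forall>n. K n = 0 \<longrightarrow> cinner (min_norm_solution K y) n = 0"
    using min_norm_solution_eqI by simp_all
qed

lemma is_pinv_min_norm_solution: "is_pinv K (min_norm_solution K)"
proof -
  let ?L = "min_norm_solution K" and ?R = "range K" and ?N = "{n. K n = 0}"
  note R = csubspace_range[OF K] closed_range
  note N = csubspace_kernel[OF K] closed_kernel[OF K]
  obtain C where "C \<ge> 0"
    and C: "\<And>y. y \<in> ?R \<Longrightarrow> \<exists>x. K x = y \<and> (\<forall>n. K n = 0 \<longrightarrow> cinner x n = 0) \<and> norm x \<le> C * norm y"
    using closed_range_orth_preimages by blast
  have L_bound: "norm (?L y) \<le> norm y * C" for y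
  proof -
    obtain x where x: "K x = orth_proj ?R y" "\<forall>n. K n = 0 \<longrightarrow> cinner x n = 0"
      "norm x \<le> C * norm (orth_proj ?R y)"
      using C[OF orth_proj_in[OF R]] by blast
    then have "norm (?L y) \<le> C * norm (orth_proj ?R y)"
      using min_norm_solution_eqI by simp
    also have "\<dots> \<le> C * norm y"
      by (rule mult_left_mono[OF norm_orth_proj_le[OF R] \<open>C \<ge> 0\<close>])
    finally show ?thesis
      by (simp add: ac_simps)
  qed
  have L_K: "?L (K x) = x - orth_proj ?N x" for x
    using orth_proj_in[OF N, of x] orth_proj_orth[OF N, of _ x]
    by (intro min_norm_solution_eqI) (simp_all add: orth_proj_id[OF R] bounded_clinear_diff[OF K])
  show ?thesis
    unfolding is_pinv_def
  proof (intro conjI allI)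
    show "bounded_clinear ?L"
    proof (rule bounded_clinearI[OF _ _ L_bound])
      show "?L (x + y) = ?L x + ?L y" for x y
        using min_norm_solution
        by (intro min_norm_solution_eqI) (simp_all add: orth_proj_add[OF R] bounded_clinear_add[OF K]
            cinner_add_left)
      show "?L (c *\<^sub>C x) = c *\<^sub>C ?L x" for c x
        using min_norm_solution
        by (intro min_norm_solution_eqI) (simp_all add: orth_proj_scaleC[OF R]
            bounded_clinear_scaleC[OF K] cinner_scaleC_left)
    qed
    show "K (?L (K x)) = K x" for x
      by (simp add: min_norm_solution orth_proj_id[OF R])
    show "?L (K (?L x)) = ?L x" for x
      using min_norm_solution
      by (intro min_norm_solution_eqI) (simp_all add: orth_proj_id[OF R] orth_proj_in[OF R])
    show "cinner (K (?L x)) y = cinner x (K (?L y))" for x y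
      by (simp add: min_norm_solution orth_proj_self_adjoint[OF R])
    show "cinner (?L (K x)) y = cinner x (?L (K y))" for x y
      by (simp add: L_K cinner_diff_left cinner_diff_right orth_proj_self_adjoint[OF N])
  qed
qed

lemma is_pinv_pinv: "is_pinv K (pinv K)"
proof -
  have "\<exists>!L. is_pinv K L"
  proof (rule ex_ex1I)
    show "\<exists>L. is_pinv K L"
      using is_pinv_min_norm_solution by blast
  qed (rule is_pinv_unique)
  then have "is_pinv K (THE L. is_pinv K L)"
    by (rule theI')
  then show ?thesis
    unfolding pinv_def is_pinv_def .
qed

end

context
  fixes K L :: "'a::chilbert_space \<Rightarrow> 'a"
  assumes K: "bounded_clinear K" and L: "is_pinv K L"
begin

lemma is_pinvD:
  "bounded_clinear L" "K (L (K x)) = K x"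
  "cinner (K (L x)) y = cinner x (K (L y))" "cinner (L (K x)) y = cinner x (L (K y))"
  using L unfolding is_pinv_def by blast+

lemma cadjoint_pinv_cadjoint: "cadjoint L (cadjoint K h) = K (L h)"
proof (rule cinner_eqI_right)
  fix z
  have "cinner z (cadjoint L (cadjoint K h)) = cinner (K (L z)) h"
    by (simp add: cadjoint_works[OF K] cadjoint_works[OF is_pinvD(1)])
  also have "\<dots> = cinner z (K (L h))"
    by (rule is_pinvD(3))
  finally show "cinner z (cadjoint L (cadjoint K h)) = cinner z (K (L h))" .
qed

lemma cadjoint_K_pinv: "cadjoint K (K (L h)) = cadjoint K h"
proof (rule cinner_eqI_right)
  fix z
  have "cinner z (cadjoint K (K (L h))) = cinner (K (L (K z))) h"
    by (simp add: cadjoint_works[OF K, symmetric] is_pinvD(3))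
  also have "\<dots> = cinner z (cadjoint K h)"
    by (simp add: is_pinvD(2) cadjoint_works[OF K])
  finally show "cinner z (cadjoint K (K (L h))) = cinner z (cadjoint K h)" .
qed

lemma pinv_K_cadjoint: "L (K (cadjoint K f)) = cadjoint K f"
proof (rule cinner_eqI_right)
  fix z
  have "cinner z (L (K (cadjoint K f))) = cinner (L (K z)) (cadjoint K f)"
    by (simp add: is_pinvD(4))
  also have "\<dots> = cinner z (cadjoint K f)"
    by (simp add: cadjoint_works[OF K, symmetric] is_pinvD(2))
  finally show "cinner z (L (K (cadjoint K f))) = cinner z (cadjoint K f)" .
qed

end

section \<open>Square-integrable coefficients and dual Bessel sequences\<close>

lemma borel_measurable_cnj [measurable (raw)]:
  "f \<in> borel_measurable M \<Longrightarrow> (\<lambda>x. cnj (f x)) \<in> borel_measurable M"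
  by (rule borel_measurable_continuous_on[where f = cnj]) (simp_all add: continuous_on_cnj)

lemma weakly_measurable_cinner_left:
  "weakly_measurable M F \<Longrightarrow> (\<lambda>\<omega>. cinner f (F \<omega>)) \<in> borel_measurable M"
  by (simp add: weakly_measurable_def)

lemma weakly_measurable_cinner_right:
  assumes "weakly_measurable M F"
  shows "(\<lambda>\<omega>. cinner (F \<omega>) g) \<in> borel_measurable M"
proof -
  have "(\<lambda>\<omega>. cnj (cinner g (F \<omega>))) \<in> borel_measurable M"
    using weakly_measurable_cinner_left[OF assms] by measurable
  moreover have "cnj (cinner g (F \<omega>)) = cinner (F \<omega>) g" for \<omega>
    using cinner_commute[of "F \<omega>" g] by simp
  ultimately show ?thesis
    by simp
qed

lemma norm_add_squared_le:
  fixes a b :: "'a::real_normed_vector"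
  shows "(norm (a + b))\<^sup>2 \<le> 2 * (norm a)\<^sup>2 + 2 * (norm b)\<^sup>2"
proof -
  have "(norm (a + b))\<^sup>2 \<le> (norm a + norm b)\<^sup>2"
    by (rule power_mono[OF norm_triangle_ineq]) simp
  also have "\<dots> \<le> 2 * (norm a)\<^sup>2 + 2 * (norm b)\<^sup>2"
    using sum_squares_bound[of "norm a" "norm b"] by (simp add: power2_sum)
  finally show ?thesis .
qed

lemma L2_fun_add:
  assumes "L2_fun M a" and "L2_fun M b"
  shows "L2_fun M (\<lambda>\<omega>. a \<omega> + b \<omega>)"
  unfolding L2_fun_def
proof
  have [measurable]: "a \<in> borel_measurable M" "b \<in> borel_measurable M"
    using assms by (simp_all add: L2_fun_def)
  show "(\<lambda>\<omega>. a \<omega> + b \<omega>) \<in> borel_measurable M"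
    by measurable
  show "integrable M (\<lambda>\<omega>. (cmod (a \<omega> + b \<omega>))\<^sup>2)"
  proof (rule Bochner_Integration.integrable_bound)
    show "integrable M (\<lambda>\<omega>. 2 * (cmod (a \<omega>))\<^sup>2 + 2 * (cmod (b \<omega>))\<^sup>2)"
      using assms unfolding L2_fun_def by simp
    show "AE \<omega> in M. norm ((cmod (a \<omega> + b \<omega>))\<^sup>2) \<le> norm (2 * (cmod (a \<omega>))\<^sup>2 + 2 * (cmod (b \<omega>))\<^sup>2)"
      using norm_add_squared_le[of "a _" "b _"] by simp
  qed measurable
qed

lemma L2_fun_cmult: "L2_fun M a \<Longrightarrow> L2_fun M (\<lambda>\<omega>. c * a \<omega>)"
  by (simp add: L2_fun_def norm_mult power_mult_distrib borel_measurable_times)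

lemma L2_fun_diff:
  assumes "L2_fun M a" and "L2_fun M b"
  shows "L2_fun M (\<lambda>\<omega>. a \<omega> - b \<omega>)"
  using L2_fun_add[OF assms(1) L2_fun_cmult[OF assms(2), of "- 1"]] by simp

lemma L2_fun_integrable_mult_cnj:
  assumes "L2_fun M a" and "L2_fun M b"
  shows "integrable M (\<lambda>\<omega>. a \<omega> * cnj (b \<omega>))"
proof (rule Bochner_Integration.integrable_bound)
  have [measurable]: "a \<in> borel_measurable M" "b \<in> borel_measurable M"
    using assms by (simp_all add: L2_fun_def)
  show "integrable M (\<lambda>\<omega>. (cmod (a \<omega>))\<^sup>2 + (cmod (b \<omega>))\<^sup>2)"
    using assms unfolding L2_fun_def by simp
  show "(\<lambda>\<omega>. a \<omega> * cnj (b \<omega>)) \<in> borel_measurable M"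
    by measurable
  show "AE \<omega> in M. norm (a \<omega> * cnj (b \<omega>)) \<le> norm ((cmod (a \<omega>))\<^sup>2 + (cmod (b \<omega>))\<^sup>2)"
  proof (rule AE_I2)
    fix \<omega>
    have "2 * cmod (a \<omega>) * cmod (b \<omega>) \<le> (cmod (a \<omega>))\<^sup>2 + (cmod (b \<omega>))\<^sup>2"
      by (rule sum_squares_bound)
    moreover have "0 \<le> cmod (a \<omega>) * cmod (b \<omega>)"
      by simp
    ultimately have "cmod (a \<omega>) * cmod (b \<omega>) \<le> (cmod (a \<omega>))\<^sup>2 + (cmod (b \<omega>))\<^sup>2"
      by linarith
    then show "norm (a \<omega> * cnj (b \<omega>)) \<le> norm ((cmod (a \<omega>))\<^sup>2 + (cmod (b \<omega>))\<^sup>2)"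
      by (simp add: norm_mult)
  qed
qed

lemma cont_bessel_L2_fun:
  assumes "cont_bessel M G"
  shows "L2_fun M (\<lambda>\<omega>. cinner f (G \<omega>))"
  unfolding L2_fun_def
proof
  show meas: "(\<lambda>\<omega>. cinner f (G \<omega>)) \<in> borel_measurable M"
    using assms unfolding cont_bessel_def by (simp add: weakly_measurable_cinner_left)
  obtain B where "(\<integral>\<^sup>+\<omega>. ennreal ((cmod (cinner f (G \<omega>)))\<^sup>2) \<partial>M) \<le> ennreal (B * (norm f)\<^sup>2)"
    using assms unfolding cont_bessel_def by blast
  then show "integrable M (\<lambda>\<omega>. (cmod (cinner f (G \<omega>)))\<^sup>2)"
    using meas by (intro integrableI_bounded) (auto simp: le_less_trans)
qed

lemma cont_bessel_add:
  assumes "cont_bessel M G1" and "cont_bessel M G2"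
  shows "cont_bessel M (\<lambda>\<omega>. G1 \<omega> + G2 \<omega>)"
  unfolding cont_bessel_def
proof
  have meas1 [measurable]: "(\<lambda>\<omega>. cinner f (G1 \<omega>)) \<in> borel_measurable M"
    and meas2 [measurable]: "(\<lambda>\<omega>. cinner f (G2 \<omega>)) \<in> borel_measurable M" for f
    using assms unfolding cont_bessel_def by (simp_all add: weakly_measurable_cinner_left)
  then show "weakly_measurable M (\<lambda>\<omega>. G1 \<omega> + G2 \<omega>)"
    by (simp add: weakly_measurable_def cinner_add_right)
  obtain B1 B2 where "B1 > 0" "B2 > 0"
    and B1: "\<And>f. (\<integral>\<^sup>+\<omega>. ennreal ((cmod (cinner f (G1 \<omega>)))\<^sup>2) \<partial>M) \<le> ennreal (B1 * (norm f)\<^sup>2)"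
    and B2: "\<And>f. (\<integral>\<^sup>+\<omega>. ennreal ((cmod (cinner f (G2 \<omega>)))\<^sup>2) \<partial>M) \<le> ennreal (B2 * (norm f)\<^sup>2)"
    using assms unfolding cont_bessel_def by blast
  have "(\<integral>\<^sup>+\<omega>. ennreal ((cmod (cinner f (G1 \<omega> + G2 \<omega>)))\<^sup>2) \<partial>M)
        \<le> ennreal ((2 * B1 + 2 * B2) * (norm f)\<^sup>2)" for f
  proof -
    have "(\<integral>\<^sup>+\<omega>. ennreal ((cmod (cinner f (G1 \<omega> + G2 \<omega>)))\<^sup>2) \<partial>M)
        \<le> (\<integral>\<^sup>+\<omega>. ennreal (2 * (cmod (cinner f (G1 \<omega>)))\<^sup>2 + 2 * (cmod (cinner f (G2 \<omega>)))\<^sup>2) \<partial>M)"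
      by (intro nn_integral_mono ennreal_leI) (simp add: cinner_add_right norm_add_squared_le)
    also have "\<dots> = 2 * (\<integral>\<^sup>+\<omega>. ennreal ((cmod (cinner f (G1 \<omega>)))\<^sup>2) \<partial>M)
                 + 2 * (\<integral>\<^sup>+\<omega>. ennreal ((cmod (cinner f (G2 \<omega>)))\<^sup>2) \<partial>M)"
      by (simp add: ennreal_mult nn_integral_add nn_integral_cmult)
    also have "\<dots> \<le> 2 * ennreal (B1 * (norm f)\<^sup>2) + 2 * ennreal (B2 * (norm f)\<^sup>2)"
      by (intro add_mono mult_left_mono B1 B2) simp_all
    also have "\<dots> = ennreal (2 * (B1 * (norm f)\<^sup>2)) + ennreal (2 * (B2 * (norm f)\<^sup>2))"
      using \<open>B1 > 0\<close> \<open>B2 > 0\<close> by (simp add: ennreal_mult)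
    also have "\<dots> = ennreal ((2 * B1 + 2 * B2) * (norm f)\<^sup>2)"
      using \<open>B1 > 0\<close> \<open>B2 > 0\<close> by (simp add: ennreal_plus[symmetric] algebra_simps del: ennreal_plus)
    finally show ?thesis .
  qed
  moreover have "2 * B1 + 2 * B2 > 0"
    using \<open>B1 > 0\<close> \<open>B2 > 0\<close> by simp
  ultimately show "\<exists>B>0. \<forall>f. (\<integral>\<^sup>+\<omega>. ennreal ((cmod (cinner f (G1 \<omega> + G2 \<omega>)))\<^sup>2) \<partial>M)
                        \<le> ennreal (B * (norm f)\<^sup>2)"
    by blast
qed

lemma cont_bessel_L2_multiple:
  assumes "L2_fun M \<phi>"
  shows "cont_bessel M (\<lambda>\<omega>. cnj (\<phi> \<omega>) *\<^sub>C h)"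
  unfolding cont_bessel_def
proof
  have [measurable]: "\<phi> \<in> borel_measurable M"
    using assms by (simp add: L2_fun_def)
  have coeff: "cinner f (cnj (\<phi> \<omega>) *\<^sub>C h) = cinner f h * \<phi> \<omega>" for f \<omega>
    by (simp add: cinner_scaleC_right mult.commute)
  then show "weakly_measurable M (\<lambda>\<omega>. cnj (\<phi> \<omega>) *\<^sub>C h)"
    unfolding weakly_measurable_def by simp
  define \<Phi> where "\<Phi> = (\<integral>\<omega>. (cmod (\<phi> \<omega>))\<^sup>2 \<partial>M)"
  have "\<Phi> \<ge> 0"
    unfolding \<Phi>_def by simp
  have "(\<integral>\<^sup>+\<omega>. ennreal ((cmod (cinner f (cnj (\<phi> \<omega>) *\<^sub>C h)))\<^sup>2) \<partial>M)
        \<le> ennreal (((norm h)\<^sup>2 * \<Phi> + 1) * (norm f)\<^sup>2)" for f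
  proof -
    have "(\<integral>\<^sup>+\<omega>. ennreal ((cmod (cinner f (cnj (\<phi> \<omega>) *\<^sub>C h)))\<^sup>2) \<partial>M)
        = ennreal ((cmod (cinner f h))\<^sup>2 * \<Phi>)"
    proof -
      have "integrable M (\<lambda>\<omega>. (cmod (cinner f h))\<^sup>2 * (cmod (\<phi> \<omega>))\<^sup>2)"
        using assms by (simp add: L2_fun_def)
      then show ?thesis
        unfolding coeff \<Phi>_def norm_mult power_mult_distrib by (simp add: nn_integral_eq_integral)
    qed
    also have "\<dots> \<le> ennreal (((norm h)\<^sup>2 * \<Phi> + 1) * (norm f)\<^sup>2)"
    proof (rule ennreal_leI)
      have "(cmod (cinner f h))\<^sup>2 * \<Phi> \<le> (norm f * norm h)\<^sup>2 * \<Phi>"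
        by (intro mult_right_mono power_mono norm_cinner_le \<open>\<Phi> \<ge> 0\<close>) simp
      also have "\<dots> \<le> ((norm h)\<^sup>2 * \<Phi> + 1) * (norm f)\<^sup>2"
        by (simp add: algebra_simps power_mult_distrib)
      finally show "(cmod (cinner f h))\<^sup>2 * \<Phi> \<le> ((norm h)\<^sup>2 * \<Phi> + 1) * (norm f)\<^sup>2" .
    qed
    finally show ?thesis .
  qed
  moreover have "(norm h)\<^sup>2 * \<Phi> + 1 > 0"
    using \<open>\<Phi> \<ge> 0\<close> by (simp add: add_nonneg_pos)
  ultimately show "\<exists>B>0. \<forall>f. (\<integral>\<^sup>+\<omega>. ennreal ((cmod (cinner f (cnj (\<phi> \<omega>) *\<^sub>C h)))\<^sup>2) \<partial>M)
                        \<le> ennreal (B * (norm f)\<^sup>2)"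
    by blast
qed

lemma weak_integral_is_iff:
  "weak_integral_is M \<phi> E x \<longleftrightarrow>
     (\<forall>g. integrable M (\<lambda>\<omega>. \<phi> \<omega> * cinner (E \<omega>) g) \<and> (\<integral>\<omega>. \<phi> \<omega> * cinner (E \<omega>) g \<partial>M) = cinner x g)"
  by (simp add: weak_integral_is_def cinner_scaleC_left)

lemma weak_integral_is_add:
  assumes "weak_integral_is M \<phi> E x" and "weak_integral_is M \<psi> E y"
  shows "weak_integral_is M (\<lambda>\<omega>. \<phi> \<omega> + \<psi> \<omega>) E (x + y)"
  using assms by (simp add: weak_integral_is_iff distrib_right cinner_add_left)

lemma weak_integral_is_diff:
  assumes "weak_integral_is M \<phi> E x" and "weak_integral_is M \<psi> E y"
  shows "weak_integral_is M (\<lambda>\<omega>. \<phi> \<omega> - \<psi> \<omega>) E (x - y)"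
  using assms by (simp add: weak_integral_is_iff left_diff_distrib cinner_diff_left)

lemma weak_integral_is_cmult:
  assumes "weak_integral_is M \<phi> E x"
  shows "weak_integral_is M (\<lambda>\<omega>. c * \<phi> \<omega>) E (c *\<^sub>C x)"
  using assms by (simp add: weak_integral_is_iff cinner_scaleC_left mult.assoc)

text \<open>If \<open>E\<close> had a nonzero \<open>L\<^sup>2\<close> relation \<open>\<phi>\<close>, the rank-one perturbation
  \<open>G + \<phi>\<^sup>* h\<close> of a dual \<open>G\<close> would be another dual.\<close>
lemma unique_dual_imp_L2_independent:
  fixes E :: "'w \<Rightarrow> 'a::complex_inner" and h :: 'a
  assumes unique: "unique_dual_cont_bessel M L E" and "h \<noteq> 0"
  shows "cont_L2_independent M E"
  unfolding cont_L2_independent_def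
proof (intro allI impI, elim conjE)
  fix \<phi>
  assume "L2_fun M \<phi>" and \<phi>_rel: "weak_integral_is M \<phi> E 0"
  obtain G where G: "dual_cont_bessel M L E G"
    using unique unfolding unique_dual_cont_bessel_def by blast
  let ?G' = "\<lambda>\<omega>. G \<omega> + cnj (\<phi> \<omega>) *\<^sub>C h"
  have "dual_cont_bessel M L E ?G'"
    unfolding dual_cont_bessel_def
  proof (intro conjI allI)
    show "cont_bessel M ?G'"
      using G unfolding dual_cont_bessel_def
      by (intro cont_bessel_add cont_bessel_L2_multiple[OF \<open>L2_fun M \<phi>\<close>]) simp
    fix f
    have "weak_integral_is M (\<lambda>\<omega>. cinner f (G \<omega>)) E (L f)"
      using G unfolding dual_cont_bessel_def by blast
    from weak_integral_is_add[OF this weak_integral_is_cmult[OF \<phi>_rel, of "cinner f h"]]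
    have "weak_integral_is M (\<lambda>\<omega>. cinner f (G \<omega>) + cinner f h * \<phi> \<omega>) E (L f)"
      by simp
    then show "weak_integral_is M (\<lambda>\<omega>. cinner f (?G' \<omega>)) E (L f)"
      by (simp add: cinner_add_right cinner_scaleC_right mult.commute)
  qed
  with G unique have "AE \<omega> in M. G \<omega> = ?G' \<omega>"
    unfolding unique_dual_cont_bessel_def by blast
  then show "AE \<omega> in M. \<phi> \<omega> = 0"
  proof eventually_elim
    case (elim \<omega>)
    then have "norm (cnj (\<phi> \<omega>) *\<^sub>C h) = 0"
      by simp
    with \<open>h \<noteq> 0\<close> show "\<phi> \<omega> = 0"
      by (simp add: norm_scaleC)
  qed
qed

lemma cinner_dense_eq_0:
  fixes v :: "'a::complex_inner"
  assumes dense: "\<And>X. open X \<Longrightarrow> X \<noteq> {} \<Longrightarrow> \<exists>d\<in>D. d \<in> X"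
    and orth: "\<And>d. d \<in> D \<Longrightarrow> cinner d v = 0"
  shows "v = 0"
proof (rule ccontr)
  assume "v \<noteq> 0"
  then obtain d where "d \<in> D" and d: "norm (v - d) < norm v / 2"
    using dense[of "ball v (norm v / 2)"] by (auto simp: dist_norm)
  have "(norm v)\<^sup>2 = cmod (cinner (v - d) v)"
    using orth[OF \<open>d \<in> D\<close>] by (simp add: cinner_diff_left cinner_self_norm norm_power)
  also have "\<dots> \<le> norm (v - d) * norm v"
    by (rule norm_cinner_le)
  also have "\<dots> < (norm v / 2) * norm v"
    using d \<open>v \<noteq> 0\<close> by (intro mult_strict_right_mono) simp_all
  finally show False
    using \<open>v \<noteq> 0\<close> by (simp add: power2_eq_square)
qed

lemma L2_independent_dual_AE_unique:
  fixes E :: "'w \<Rightarrow> 'a::{complex_inner, second_countable_topology}"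
  assumes indep: "cont_L2_independent M E"
    and G1: "dual_cont_bessel M L E G1" and G2: "dual_cont_bessel M L E G2"
  shows "AE \<omega> in M. G1 \<omega> = G2 \<omega>"
proof -
  have "AE \<omega> in M. cinner f (G1 \<omega>) - cinner f (G2 \<omega>) = 0" for f
  proof -
    have "cont_bessel M G1" "weak_integral_is M (\<lambda>\<omega>. cinner f (G1 \<omega>)) E (L f)"
      and "cont_bessel M G2" "weak_integral_is M (\<lambda>\<omega>. cinner f (G2 \<omega>)) E (L f)"
      using G1 G2 unfolding dual_cont_bessel_def by blast+
    then have "L2_fun M (\<lambda>\<omega>. cinner f (G1 \<omega>) - cinner f (G2 \<omega>))"
      and "weak_integral_is M (\<lambda>\<omega>. cinner f (G1 \<omega>) - cinner f (G2 \<omega>)) E 0"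
      using L2_fun_diff[OF cont_bessel_L2_fun cont_bessel_L2_fun] weak_integral_is_diff by fastforce+
    then show ?thesis
      using indep unfolding cont_L2_independent_def by blast
  qed
  moreover obtain D :: "'a set" where "countable D"
    and dense: "\<And>X. open X \<Longrightarrow> X \<noteq> {} \<Longrightarrow> \<exists>d\<in>D. d \<in> X"
    using countable_dense_setE by blast
  ultimately have "AE \<omega> in M. \<forall>d\<in>D. cinner d (G1 \<omega> - G2 \<omega>) = 0"
    unfolding AE_ball_countable[OF \<open>countable D\<close>] by (simp add: cinner_diff_right)
  then show ?thesis
  proof eventually_elim
    case (elim \<omega>)
    then have "G1 \<omega> - G2 \<omega> = 0"
      using cinner_dense_eq_0[OF dense, of "G1 \<omega> - G2 \<omega>"] by blast
    then show "G1 \<omega> = G2 \<omega>"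
      by simp
  qed
qed

lemma L2_independent_unique_dual:
  fixes E :: "'w \<Rightarrow> 'a::{complex_inner, second_countable_topology}"
  assumes "cont_L2_independent M E" and "dual_cont_bessel M L E G"
  shows "unique_dual_cont_bessel M L E"
  using assms L2_independent_dual_AE_unique unfolding unique_dual_cont_bessel_def by blast

section \<open>Parseval continuous K-frames\<close>

lemma parseval_frame_L2_fun:
  assumes "parseval_cont_K_frame M K F"
  shows "L2_fun M (\<lambda>\<omega>. cinner f (F \<omega>))"
    and "(\<integral>\<omega>. (cmod (cinner f (F \<omega>)))\<^sup>2 \<partial>M) = (norm (cadjoint K f))\<^sup>2"
proof -
  have meas: "(\<lambda>\<omega>. cinner f (F \<omega>)) \<in> borel_measurable M"
    using assms unfolding parseval_cont_K_frame_def by (simp add: weakly_measurable_cinner_left)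
  have "(\<integral>\<^sup>+\<omega>. ennreal ((cmod (cinner f (F \<omega>)))\<^sup>2) \<partial>M) = ennreal ((norm (cadjoint K f))\<^sup>2)"
    using assms unfolding parseval_cont_K_frame_def by blast
  then have "integrable M (\<lambda>\<omega>. (cmod (cinner f (F \<omega>)))\<^sup>2)"
    and "(\<integral>\<omega>. (cmod (cinner f (F \<omega>)))\<^sup>2 \<partial>M) = (norm (cadjoint K f))\<^sup>2"
    using nn_integral_eq_integrable[of "\<lambda>\<omega>. (cmod (cinner f (F \<omega>)))\<^sup>2" M] meas by simp_all
  then show "L2_fun M (\<lambda>\<omega>. cinner f (F \<omega>))"
    and "(\<integral>\<omega>. (cmod (cinner f (F \<omega>)))\<^sup>2 \<partial>M) = (norm (cadjoint K f))\<^sup>2"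
    using meas by (simp_all add: L2_fun_def)
qed

text \<open>Polarization turns the Parseval identity into an identity of sesquilinear forms.\<close>
lemma parseval_frame_cross_integral:
  fixes K :: "'a::chilbert_space \<Rightarrow> 'a"
  assumes K: "bounded_clinear K" and F: "parseval_cont_K_frame M K F"
  shows "(\<integral>\<omega>. cinner f (F \<omega>) * cnj (cinner g (F \<omega>)) \<partial>M) = cinner (cadjoint K f) (cadjoint K g)"
proof -
  define B where "B f g = (\<integral>\<omega>. cinner f (F \<omega>) * cnj (cinner g (F \<omega>)) \<partial>M)" for f g
  define B' where "B' f g = cinner (cadjoint K f) (cadjoint K g)" for f g
  have int: "integrable M (\<lambda>\<omega>. cinner f (F \<omega>) * cnj (cinner g (F \<omega>)))" for f g
    by (intro L2_fun_integrable_mult_cnj parseval_frame_L2_fun[OF F])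
  have B: "B (x + y) z = B x z + B y z" "B x (y + z) = B x y + B x z"
    "B (c *\<^sub>C x) y = c * B x y" "B x (c *\<^sub>C y) = cnj c * B x y" for x y z c
    unfolding B_def using int
    by (simp_all add: cinner_add_left cinner_scaleC_left distrib_left distrib_right mult.assoc
        mult.left_commute)
  have A: "bounded_clinear (cadjoint K)"
    by (rule bounded_clinear_cadjoint[OF K])
  have B': "B' (x + y) z = B' x z + B' y z" "B' x (y + z) = B' x y + B' x z"
    "B' (c *\<^sub>C x) y = c * B' x y" "B' x (c *\<^sub>C y) = cnj c * B' x y" for x y z c
    unfolding B'_def
    by (simp_all add: bounded_clinear_add[OF A] bounded_clinear_scaleC[OF A] cinner_add_left
        cinner_add_right cinner_scaleC_left cinner_scaleC_right)
  have diag: "B x x = B' x x" for x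
  proof -
    have "B x x = (\<integral>\<omega>. complex_of_real ((cmod (cinner x (F \<omega>)))\<^sup>2) \<partial>M)"
      unfolding B_def complex_norm_square ..
    also have "\<dots> = B' x x"
      by (simp add: parseval_frame_L2_fun(2)[OF F] B'_def cinner_self_norm del: of_real_power)
    finally show ?thesis .
  qed
  have "B f g = (B (f + g) (f + g) - B (f - g) (f - g)
      + \<i> * B (f + \<i> *\<^sub>C g) (f + \<i> *\<^sub>C g) - \<i> * B (f - \<i> *\<^sub>C g) (f - \<i> *\<^sub>C g)) / 4"
    by (rule sesquilinear_polarization[of B, OF B])
  also have "\<dots> = B' f g"
    unfolding diag by (rule sesquilinear_polarization[of B', OF B', symmetric])
  finally show ?thesis
    unfolding B_def B'_def .
qed

lemma parseval_frame_cont_bessel: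
  fixes K :: "'a::chilbert_space \<Rightarrow> 'a"
  assumes "bounded_clinear K" and "parseval_cont_K_frame M K F"
  shows "cont_bessel M F"
  unfolding cont_bessel_def
proof
  show "weakly_measurable M F"
    using assms(2) unfolding parseval_cont_K_frame_def by blast
  obtain B where "B > 0" and B: "\<And>x. norm (cadjoint K x) \<le> norm x * B"
    using bounded_clinear_pos_bounded[OF bounded_clinear_cadjoint[OF assms(1)]] by blast
  have "(norm (cadjoint K f))\<^sup>2 \<le> B\<^sup>2 * (norm f)\<^sup>2" for f
    using power_mono[OF B[of f]] by (simp add: power_mult_distrib mult.commute)
  then have "(\<integral>\<^sup>+\<omega>. ennreal ((cmod (cinner f (F \<omega>)))\<^sup>2) \<partial>M) \<le> ennreal (B\<^sup>2 * (norm f)\<^sup>2)" for f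
    using assms(2) unfolding parseval_cont_K_frame_def by (simp add: ennreal_leI)
  with \<open>B > 0\<close> show "\<exists>B>0. \<forall>f. (\<integral>\<^sup>+\<omega>. ennreal ((cmod (cinner f (F \<omega>)))\<^sup>2) \<partial>M) \<le> ennreal (B * (norm f)\<^sup>2)"
    by (intro exI[of _ "B\<^sup>2"]) simp
qed

lemma parseval_frame_AE_orthogonal:
  assumes "parseval_cont_K_frame M K F" and "cadjoint K d = 0"
  shows "AE \<omega> in M. cinner d (F \<omega>) = 0"
proof -
  have [measurable]: "(\<lambda>\<omega>. cinner d (F \<omega>)) \<in> borel_measurable M"
    using assms(1) unfolding parseval_cont_K_frame_def by (simp add: weakly_measurable_cinner_left)
  have "(\<integral>\<^sup>+\<omega>. ennreal ((cmod (cinner d (F \<omega>)))\<^sup>2) \<partial>M) = 0"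
    using assms unfolding parseval_cont_K_frame_def by simp
  then have "AE \<omega> in M. ennreal ((cmod (cinner d (F \<omega>)))\<^sup>2) = 0"
    by (subst nn_integral_0_iff_AE[symmetric]) simp_all
  then show ?thesis
    by eventually_elim simp
qed

context
  fixes M :: "'w measure" and K :: "'h::chilbert_space \<Rightarrow> 'h" and F :: "'w \<Rightarrow> 'h"
  assumes K: "bounded_clinear K" and closed_range: "closed (range K)"
    and F: "parseval_cont_K_frame M K F"
begin

lemma bounded_clinear_pinv: "bounded_clinear (pinv K)"
  by (rule is_pinvD(1)[OF K is_pinv_pinv[OF K closed_range]])

lemma cinner_pinv_left: "cinner (pinv K x) g = cinner x (cadjoint (pinv K) g)"
  by (rule cadjoint_works[OF bounded_clinear_pinv])

text \<open>The frame vectors lie a.e. in the range of \<open>K\<close>, on which \<open>K K\<^sup>\<dagger>\<close> is the identity.\<close>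
lemma parseval_frame_AE_range:
  "AE \<omega> in M. cinner (F \<omega>) (K (pinv K h)) = cinner (F \<omega>) h"
proof -
  have "cadjoint K (h - K (pinv K h)) = 0"
    by (simp add: bounded_clinear_diff[OF bounded_clinear_cadjoint[OF K]]
        cadjoint_K_pinv[OF K is_pinv_pinv[OF K closed_range]])
  from parseval_frame_AE_orthogonal[OF F this]
  show ?thesis
  proof eventually_elim
    case (elim \<omega>)
    then have "cinner (F \<omega>) (h - K (pinv K h)) = 0"
      by (metis cinner_commute complex_cnj_zero)
    then show ?case
      by (simp add: cinner_diff_right)
  qed
qed

lemma weak_integral_zero_pinv_iff:
  assumes meas: "\<phi> \<in> borel_measurable M"
  shows "weak_integral_is M \<phi> F 0 \<longleftrightarrow> weak_integral_is M \<phi> (\<lambda>\<omega>. pinv K (F \<omega>)) 0"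
  unfolding weak_integral_is_iff cinner_pinv_left cinner_zero_left
proof (intro iffI allI)
  fix h
  assume rel: "\<forall>g. integrable M (\<lambda>\<omega>. \<phi> \<omega> * cinner (F \<omega>) (cadjoint (pinv K) g))
                 \<and> (\<integral>\<omega>. \<phi> \<omega> * cinner (F \<omega>) (cadjoint (pinv K) g) \<partial>M) = 0"
  have "cadjoint (pinv K) (cadjoint K h) = K (pinv K h)"
    by (rule cadjoint_pinv_cadjoint[OF K is_pinv_pinv[OF K closed_range]])
  then have int: "integrable M (\<lambda>\<omega>. \<phi> \<omega> * cinner (F \<omega>) (K (pinv K h)))"
    and zero: "(\<integral>\<omega>. \<phi> \<omega> * cinner (F \<omega>) (K (pinv K h)) \<partial>M) = 0"
    using rel[rule_format, of "cadjoint K h"] by simp_all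
  have AE_eq: "AE \<omega> in M. \<phi> \<omega> * cinner (F \<omega>) (K (pinv K h)) = \<phi> \<omega> * cinner (F \<omega>) h"
    using parseval_frame_AE_range[of h] by eventually_elim simp
  have weak: "weakly_measurable M F"
    using F unfolding parseval_cont_K_frame_def by blast
  have meas_h: "(\<lambda>\<omega>. \<phi> \<omega> * cinner (F \<omega>) u) \<in> borel_measurable M" for u
    using meas weakly_measurable_cinner_right[OF weak, of u] by simp
  show "integrable M (\<lambda>\<omega>. \<phi> \<omega> * cinner (F \<omega>) h) \<and> (\<integral>\<omega>. \<phi> \<omega> * cinner (F \<omega>) h \<partial>M) = 0"
    using integrable_cong_AE_imp[OF int meas_h AE_eq] integral_cong_AE[OF meas_h meas_h AE_eq] zero
    by simp
qed blast

lemma cont_L2_independent_pinv_iff: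
  "cont_L2_independent M F \<longleftrightarrow> cont_L2_independent M (\<lambda>\<omega>. pinv K (F \<omega>))"
  unfolding cont_L2_independent_def L2_fun_def using weak_integral_zero_pinv_iff by blast

lemma parseval_frame_dual_of_pinv: "dual_cont_bessel M (cadjoint K) (\<lambda>\<omega>. pinv K (F \<omega>)) F"
  unfolding dual_cont_bessel_def
proof (intro conjI allI)
  show "cont_bessel M F"
    by (rule parseval_frame_cont_bessel[OF K F])
  fix f
  have coeff: "cinner (F \<omega>) (cadjoint (pinv K) g) = cnj (cinner (cadjoint (pinv K) g) (F \<omega>))" for \<omega> g
    by (rule cinner_commute)
  have "cinner (cadjoint K f) (cadjoint K (cadjoint (pinv K) g)) = cinner (cadjoint K f) g" for g
    by (simp add: cadjoint_works[OF K, symmetric] cadjoint_works[OF bounded_clinear_pinv, symmetric]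
        pinv_K_cadjoint[OF K is_pinv_pinv[OF K closed_range]])
  then show "weak_integral_is M (\<lambda>\<omega>. cinner f (F \<omega>)) (\<lambda>\<omega>. pinv K (F \<omega>)) (cadjoint K f)"
    unfolding weak_integral_is_iff cinner_pinv_left coeff
    by (simp add: L2_fun_integrable_mult_cnj parseval_frame_L2_fun(1)[OF F]
        parseval_frame_cross_integral[OF K F])
qed

end

theorem theorem3p8:
  fixes M :: "'w measure"
    and K :: "'h::{chilbert_space, second_countable_topology} \<Rightarrow> 'h"
    and F :: "'w \<Rightarrow> 'h"
  assumes "bounded_clinear K"
    and "closed (range K)"
    and "parseval_cont_K_frame M K F"
  shows "(cont_L2_independent M F \<longleftrightarrow> cont_L2_independent M (\<lambda>\<omega>. pinv K (F \<omega>)))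
         \<and> (unique_dual_cont_bessel M K F \<longrightarrow>
              unique_dual_cont_bessel M (cadjoint K) (\<lambda>\<omega>. pinv K (F \<omega>)))"
proof (intro conjI impI)
  show indep_iff: "cont_L2_independent M F \<longleftrightarrow> cont_L2_independent M (\<lambda>\<omega>. pinv K (F \<omega>))"
    by (rule cont_L2_independent_pinv_iff[OF assms])
  assume unique: "unique_dual_cont_bessel M K F"
  have dual: "dual_cont_bessel M (cadjoint K) (\<lambda>\<omega>. pinv K (F \<omega>)) F"
    by (rule parseval_frame_dual_of_pinv[OF assms])
  show "unique_dual_cont_bessel M (cadjoint K) (\<lambda>\<omega>. pinv K (F \<omega>))"
  proof (cases "\<exists>h::'h. h \<noteq> 0")
    case True
    then obtain h :: 'h where "h \<noteq> 0"
      by blast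
    with unique have "cont_L2_independent M F"
      by (rule unique_dual_imp_L2_independent)
    with indep_iff dual show ?thesis
      using L2_independent_unique_dual by blast
  next
    case False
    then have "AE \<omega> in M. G1 \<omega> = G2 \<omega>" for G1 G2 :: "'w \<Rightarrow> 'h"
      by (metis (full_types) AE_I2)
    with dual show ?thesis
      unfolding unique_dual_cont_bessel_def by blast
  qed
qed

end
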